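(* For any finite simple graph $X$ and any vertex $v$ of $X$, exactly half of the elements $s=((x_1,k_1),\dots,(x_n,k_n))$ of $\mathrm{Fix}(\mathbf{F}^\uparrow)$ satisfy $x_v=1$.
   Context: Let $X$ be a finite simple graph with vertices $1,\dots,n$; $d(v)$ is the degree of $v$ and $n[v]$ the closed neighborhood of $v$. An extended vertex state is $s_v=(x_v,k_v)\in\{0,1\}\times\{1,\dots,d(v)+1\}$; $\mathcal{S}$ is the product of these sets. Let $\sigma(x[v])=|\{u\in n[v]:x_u=1\}|$. The increasing vertex function maps $(x_v,k_v)$ to $(x_v',k_v')$ with $x_v'=1$ iff $\sigma(x[v])\ge k_v$ (else $0$), and $k_v'=k_v+1$ if $x_v=0$ and $\sigma(x[v])\ge k_v$, else $k_v'=k_v$. $\mathbf{F}^\uparrow:\mathcal{S}\to\mathcal{S}$ applies this vertex function at all vertices simultaneously, and $\mathrm{Fix}(\mathbf{F}^\uparrow)$ is its set of fixed points. *)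

theory Defs
  imports "HOL-Library.FuncSet"
begin

definition verts :: "nat \<Rightarrow> nat set" where
  "verts n = {1..n}"

definition simple_graph :: "nat \<Rightarrow> (nat \<Rightarrow> nat \<Rightarrow> bool) \<Rightarrow> bool" where
  "simple_graph n E \<longleftrightarrow>
     (\<forall>u\<in>verts n. \<forall>v\<in>verts n. E u v \<longrightarrow> E v u) \<and> (\<forall>v\<in>verts n. \<not> E v v)"

definition nbhd :: "nat \<Rightarrow> (nat \<Rightarrow> nat \<Rightarrow> bool) \<Rightarrow> nat \<Rightarrow> nat set" where
  "nbhd n E v = {u \<in> verts n. E v u}"

definition degree :: "nat \<Rightarrow> (nat \<Rightarrow> nat \<Rightarrow> bool) \<Rightarrow> nat \<Rightarrow> nat" where
  "degree n E v = card (nbhd n E v)"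

definition closed_nbhd :: "nat \<Rightarrow> (nat \<Rightarrow> nat \<Rightarrow> bool) \<Rightarrow> nat \<Rightarrow> nat set" where
  "closed_nbhd n E v = insert v (nbhd n E v)"

definition ext_states :: "nat \<Rightarrow> (nat \<Rightarrow> nat \<Rightarrow> bool) \<Rightarrow> (nat \<Rightarrow> nat \<times> nat) set" where
  "ext_states n E = (\<Pi>\<^sub>E v\<in>verts n. {0,1} \<times> {1..degree n E v + 1})"

definition sigma :: "nat \<Rightarrow> (nat \<Rightarrow> nat \<Rightarrow> bool) \<Rightarrow> (nat \<Rightarrow> nat \<times> nat) \<Rightarrow> nat \<Rightarrow> nat" where
  "sigma n E s v = card {u \<in> closed_nbhd n E v. fst (s u) = 1}"

definition inc_vertex_fun :: "nat \<Rightarrow> (nat \<Rightarrow> nat \<Rightarrow> bool) \<Rightarrow> (nat \<Rightarrow> nat \<times> nat) \<Rightarrow> nat \<Rightarrow> nat \<times> nat" where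
  "inc_vertex_fun n E s v =
     (let (x, k) = s v; sg = sigma n E s v in
      (if sg \<ge> k then 1 else 0,
       if x = 0 \<and> sg \<ge> k then k + 1 else k))"

definition F_up :: "nat \<Rightarrow> (nat \<Rightarrow> nat \<Rightarrow> bool) \<Rightarrow> (nat \<Rightarrow> nat \<times> nat) \<Rightarrow> (nat \<Rightarrow> nat \<times> nat)" where
  "F_up n E s = (\<lambda>v\<in>verts n. inc_vertex_fun n E s v)"

definition Fix_up :: "nat \<Rightarrow> (nat \<Rightarrow> nat \<Rightarrow> bool) \<Rightarrow> (nat \<Rightarrow> nat \<times> nat) set" where
  "Fix_up n E = {s \<in> ext_states n E. F_up n E s = s}"

end

theory Submission
  imports Defs
begin

text \<open>Complementing every vertex state, (x, k) \<mapsto> (1 - x, d(v) + 2 - k), is an involution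
  of the extended state space. It complements the number of active vertices in every closed
  neighbourhood, \<sigma> \<mapsto> d(v) + 1 - \<sigma>, so the threshold condition x = 1 \<longleftrightarrow> k \<le> \<sigma>
  characterising fixed points is preserved. Hence it is an involution of Fix(F\<up>) that flips
  x_v, and pairs the fixed points with x_v = 1 bijectively with those with x_v = 0.\<close>

lemma twice_card_Collect_eq_card_if_involution:
  assumes "finite A"
    and "\<And>x. x \<in> A \<Longrightarrow> f x \<in> A"
    and "\<And>x. x \<in> A \<Longrightarrow> f (f x) = x"
    and "\<And>x. x \<in> A \<Longrightarrow> P (f x) \<longleftrightarrow> \<not> P x"
  shows "2 * card {x \<in> A. P x} = card A"
proof -
  have "bij_betw f {x \<in> A. P x} {x \<in> A. \<not> P x}"
    by (rule bij_betw_byWitness[where f' = f]) (use assms in auto)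
  then have "card {x \<in> A. P x} = card {x \<in> A. \<not> P x}"
    by (rule bij_betw_same_card)
  moreover have "card A = card {x \<in> A. P x} + card {x \<in> A. \<not> P x}"
    using \<open>finite A\<close> by (subst card_Un_disjoint[symmetric]) (auto intro: arg_cong[where f = card])
  ultimately show ?thesis
    by simp
qed

lemma ext_states_memD:
  assumes "s \<in> ext_states n E" "u \<in> verts n"
  shows "fst (s u) \<in> {0, 1}" "snd (s u) \<in> {1..degree n E u + 1}"
  using assms by (auto simp: ext_states_def PiE_iff mem_Times_iff)

lemma ext_states_undefined:
  "s \<in> ext_states n E \<Longrightarrow> u \<notin> verts n \<Longrightarrow> s u = undefined"
  by (auto simp: ext_states_def PiE_iff extensional_def)

lemma finite_ext_states: "finite (ext_states n E)"
  unfolding ext_states_def verts_def by (rule finite_PiE) auto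

lemma card_closed_nbhd:
  assumes "simple_graph n E" "u \<in> verts n"
  shows "card (closed_nbhd n E u) = degree n E u + 1"
proof -
  have "u \<notin> nbhd n E u"
    using assms by (auto simp: nbhd_def simple_graph_def)
  then show ?thesis
    by (simp add: closed_nbhd_def degree_def nbhd_def verts_def)
qed

lemma closed_nbhd_subset_verts: "u \<in> verts n \<Longrightarrow> closed_nbhd n E u \<subseteq> verts n"
  by (auto simp: closed_nbhd_def nbhd_def)

lemma sigma_le_card_closed_nbhd: "sigma n E s u \<le> card (closed_nbhd n E u)"
  unfolding sigma_def closed_nbhd_def nbhd_def verts_def by (rule card_mono) auto

lemma inc_vertex_fun_fixed_iff:
  assumes "fst (s u) \<in> {0, 1}"
  shows "inc_vertex_fun n E s u = s u \<longleftrightarrow> (fst (s u) = 1 \<longleftrightarrow> snd (s u) \<le> sigma n E s u)"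
  using assms unfolding inc_vertex_fun_def by (cases "s u") (auto simp: Let_def)

lemma Fix_up_iff:
  "s \<in> Fix_up n E \<longleftrightarrow>
     s \<in> ext_states n E \<and> (\<forall>u\<in>verts n. fst (s u) = 1 \<longleftrightarrow> snd (s u) \<le> sigma n E s u)"
proof -
  have "F_up n E s = s \<longleftrightarrow> (\<forall>u\<in>verts n. inc_vertex_fun n E s u = s u)"
    if "s \<in> ext_states n E"
    using that ext_states_undefined[OF that]
    by (auto simp: F_up_def fun_eq_iff)
  moreover have "(\<forall>u\<in>verts n. inc_vertex_fun n E s u = s u) \<longleftrightarrow>
      (\<forall>u\<in>verts n. fst (s u) = 1 \<longleftrightarrow> snd (s u) \<le> sigma n E s u)"
    if "s \<in> ext_states n E"
    using inc_vertex_fun_fixed_iff ext_states_memD(1)[OF that] by blast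
  ultimately show ?thesis
    by (auto simp: Fix_up_def)
qed

definition dual_state ::
    "nat \<Rightarrow> (nat \<Rightarrow> nat \<Rightarrow> bool) \<Rightarrow> (nat \<Rightarrow> nat \<times> nat) \<Rightarrow> (nat \<Rightarrow> nat \<times> nat)" where
  "dual_state n E s = (\<lambda>u\<in>verts n. (1 - fst (s u), degree n E u + 2 - snd (s u)))"

lemma dual_state_in_ext_states:
  "s \<in> ext_states n E \<Longrightarrow> dual_state n E s \<in> ext_states n E"
  by (fastforce simp: ext_states_def dual_state_def PiE_iff mem_Times_iff)

lemma dual_state_dual_state:
  assumes "s \<in> ext_states n E"
  shows "dual_state n E (dual_state n E s) = s"
proof
  fix u
  show "dual_state n E (dual_state n E s) u = s u"
    using assms ext_states_memD[OF assms, of u] ext_states_undefined[OF assms, of u]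
    by (cases "s u") (auto simp: dual_state_def)
qed

lemma sigma_dual_state:
  assumes "simple_graph n E" "u \<in> verts n" "s \<in> ext_states n E"
  shows "sigma n E (dual_state n E s) u = degree n E u + 1 - sigma n E s u"
proof -
  let ?C = "closed_nbhd n E u"
  have C: "?C \<subseteq> verts n" "finite ?C"
    using assms(2) closed_nbhd_subset_verts by (auto simp: closed_nbhd_def nbhd_def verts_def)
  have "{w \<in> ?C. fst (dual_state n E s w) = 1} = ?C - {w \<in> ?C. fst (s w) = 1}"
    using C(1) ext_states_memD(1)[OF assms(3)] by (force simp: dual_state_def)
  then have "sigma n E (dual_state n E s) u = card ?C - sigma n E s u"
    using C(2) by (simp add: sigma_def card_Diff_subset)
  then show ?thesis
    using card_closed_nbhd[OF assms(1,2)] by simp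
qed

lemma dual_state_in_Fix_up:
  assumes "simple_graph n E" "s \<in> Fix_up n E"
  shows "dual_state n E s \<in> Fix_up n E"
proof -
  have s: "s \<in> ext_states n E" "\<forall>u\<in>verts n. fst (s u) = 1 \<longleftrightarrow> snd (s u) \<le> sigma n E s u"
    using assms(2) by (auto simp: Fix_up_iff)
  have "fst (dual_state n E s u) = 1 \<longleftrightarrow> snd (dual_state n E s u) \<le> sigma n E (dual_state n E s) u"
    if u: "u \<in> verts n" for u
  proof -
    have "sigma n E s u \<le> degree n E u + 1"
      using sigma_le_card_closed_nbhd card_closed_nbhd[OF assms(1) u] by metis
    then show ?thesis
      unfolding sigma_dual_state[OF assms(1) u s(1)]
      using s ext_states_memD[OF s(1) u] u by (auto simp: dual_state_def)
  qed
  then show ?thesis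
    using s(1) by (simp add: Fix_up_iff dual_state_in_ext_states)
qed

theorem lemma4p2:
  fixes n :: nat and E :: "nat \<Rightarrow> nat \<Rightarrow> bool" and v :: nat
  assumes "simple_graph n E" and "v \<in> verts n"
  shows "2 * card {s \<in> Fix_up n E. fst (s v) = 1} = card (Fix_up n E)"
proof (rule twice_card_Collect_eq_card_if_involution)
  show "finite (Fix_up n E)"
    by (rule finite_subset[OF _ finite_ext_states]) (auto simp: Fix_up_def)
  show "dual_state n E s \<in> Fix_up n E" if "s \<in> Fix_up n E" for s
    using dual_state_in_Fix_up[OF assms(1) that] .
  show "dual_state n E (dual_state n E s) = s" if "s \<in> Fix_up n E" for s
    using that by (simp add: Fix_up_def dual_state_dual_state)
  show "fst (dual_state n E s v) = 1 \<longleftrightarrow> fst (s v) \<noteq> 1" if "s \<in> Fix_up n E" for s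
    using that assms(2) ext_states_memD(1)[of s n E v]
    by (auto simp: Fix_up_def dual_state_def)
qed

end
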